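(* Let $\alpha>0$, let $n\in\mathbb{N}$, and for $w\in\mathbb{D}$ and $i\in\mathbb{N}$ set $f_w^{[i]}(z)=\frac{z^i}{(1-\overline{w}z)^{\alpha+i}}$. Then there is a constant $C>0$ (independent of $w$ and of the scalars) such that for all non-zero complex scalars $c_0,c_1,\dots,c_n$ and all $w\in\mathbb{D}$ with $|w|>\frac12$, $$\left\|\sum_{i=0}^n c_if_w^{[i]}\right\|_{\mathcal{B}^{\alpha}}\ge C\sum_{i=0}^n|c_i|\,\|f_w^{[i]}\|_{\mathcal{B}^{\alpha}}.$$
   Context: $\mathbb{D}$ is the open unit disc in $\mathbb{C}$. For $\alpha>0$, $\mathcal{B}^{\alpha}$ is the space of analytic $f$ on $\mathbb{D}$ with $\|f\|_{\mathcal{B}^{\alpha}}=|f(0)|+\sup_{z\in\mathbb{D}}(1-|z|^2)^{\alpha}|f'(z)|<\infty$. *)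

theory Defs
  imports "HOL-Analysis.Analysis"
begin

definition bloch_norm :: "real \<Rightarrow> (complex \<Rightarrow> complex) \<Rightarrow> real" where
  "bloch_norm \<alpha> f = norm (f 0) +
     (SUP z\<in>ball 0 1. (1 - (norm z)\<^sup>2) powr \<alpha> * norm (deriv f z))"

text \<open>f_w^[i](z) = z^i / (1 - conj(w) z)^(alpha+i), principal branch
  (1 - conj w z has positive real part on the disc).\<close>
definition fw :: "real \<Rightarrow> complex \<Rightarrow> nat \<Rightarrow> complex \<Rightarrow> complex" where
  "fw \<alpha> w i z = z ^ i / (1 - cnj w * z) powr (complex_of_real (\<alpha> + real i))"

end

theory Submission
  imports Defs "HOL-Computational_Algebra.Polynomial"
begin

text \<open>
Write \<open>g = \<Sum>i\<le>n. c i * fw \<alpha> w i\<close>, \<open>P(u) = \<Sum>i\<le>n. c i * u^i\<close> and \<open>t = 1 - |w|^2\<close>.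
At a point \<open>z\<close> on the ray through \<open>w\<close> with \<open>1 - conj w z = \<rho> > 0\<close>, the derivative
\<open>g'(z)\<close> equals \<open>\<rho>^(-\<alpha>-1) conj w T(t/\<rho>)\<close>, where \<open>R(y) = P((y - t)/(conj w t))\<close> and
\<open>T = \<alpha> R + y R'\<close> multiplies the \<open>k\<close>-th coefficient of \<open>R\<close> by \<open>\<alpha> + k\<close>.
Choosing \<open>\<rho> = t / y\<close> for \<open>n + 1\<close> fixed nodes \<open>y \<in> [3/4, 1]\<close> bounds each \<open>|T(y)|\<close> by a
multiple of \<open>t \<parallel>g\<parallel>\<close>, and Lagrange interpolation turns these values into a bound
\<open>\<Sum>|coeff R k| \<lesssim> t \<parallel>g\<parallel>\<close>.  Conversely \<open>P(u) = R(t (1 + conj w u))\<close> gives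
\<open>|c i| \<lesssim> t^i \<Sum>|coeff R k|\<close>, while \<open>\<parallel>fw \<alpha> w i\<parallel> \<lesssim> t^(-i-1)\<close>; multiplying,
\<open>\<Sum>|c i| \<parallel>fw \<alpha> w i\<parallel> \<lesssim> \<Sum>|coeff R k| / t \<lesssim> \<parallel>g\<parallel>\<close>.
\<close>

section \<open>Polynomials\<close>

lemma coeff_affine_power:
  fixes a b :: "'a::comm_semiring_1"
  shows "coeff ([:a, b:] ^ k) i = of_nat (k choose i) * a ^ (k - i) * b ^ i"
proof -
  have "[:a, b:] ^ k = (monom b 1 + [:a:]) ^ k"
    by (simp add: monom_Suc monom_0)
  also have "\<dots> = (\<Sum>j\<le>k. monom (of_nat (k choose j) * a ^ (k - j) * b ^ j) j)"
    by (simp add: binomial_ring monom_power of_nat_monom mult_monom mult_ac flip: monom_0)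
  finally show ?thesis
    by (cases "i \<le> k") (simp_all add: coeff_sum binomial_eq_0 not_le)
qed

lemma coeff_pcompose_affine:
  fixes R :: "'a::comm_semiring_1 poly"
  shows "coeff (pcompose R [:a, b:]) i =
           (\<Sum>k\<le>degree R. coeff R k * of_nat (k choose i) * a ^ (k - i) * b ^ i)"
proof -
  have "pcompose R [:a, b:] = (\<Sum>k\<le>degree R. smult (coeff R k) ([:a, b:] ^ k))"
    by (simp add: pcompose_altdef poly_altdef degree_map_poly coeff_map_poly)
  then show ?thesis
    by (simp add: coeff_sum coeff_affine_power mult_ac)
qed

lemma norm_coeff_pcompose_affine_le:
  fixes R :: "'a::real_normed_field poly"
  assumes "degree R \<le> n" "norm a \<le> 1" "norm b \<le> 1"
  shows "norm (coeff (pcompose R [:a, a * b:]) i) \<le> norm a ^ i * 2 ^ n * (\<Sum>k\<le>n. norm (coeff R k))"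
proof -
  have summand_le: "norm (coeff R k * of_nat (k choose i) * a ^ (k - i) * (a * b) ^ i)
      \<le> norm (coeff R k) * (norm a ^ i * 2 ^ n)" if "k \<le> n" for k
  proof (cases "i \<le> k")
    case True
    have "k choose i \<le> 2 ^ n"
      by (rule order_trans[OF binomial_le_pow2 power_increasing]) (use that in auto)
    then have "real (k choose i) \<le> 2 ^ n"
      by (metis of_nat_le_iff of_nat_numeral of_nat_power)
    moreover have "norm a ^ (k - i) * norm b ^ i \<le> 1"
      using assms by (simp add: mult_le_one power_le_one)
    ultimately have "real (k choose i) * (norm a ^ (k - i) * norm b ^ i) \<le> 2 ^ n * 1"
      by (intro mult_mono) auto
    then have "(norm (coeff R k) * norm a ^ i) * (real (k choose i) * (norm a ^ (k - i) * norm b ^ i))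
        \<le> (norm (coeff R k) * norm a ^ i) * 2 ^ n"
      by (intro mult_left_mono) auto
    then show ?thesis
      by (simp add: norm_mult norm_power power_mult_distrib mult_ac)
  qed (simp add: binomial_eq_0)
  have "norm (coeff (pcompose R [:a, a * b:]) i)
      \<le> (\<Sum>k\<le>degree R. norm (coeff R k * of_nat (k choose i) * a ^ (k - i) * (a * b) ^ i))"
    unfolding coeff_pcompose_affine by (rule norm_sum)
  also have "\<dots> \<le> (\<Sum>k\<le>n. norm (coeff R k) * (norm a ^ i * 2 ^ n))"
    using assms(1) summand_le
    by (intro order_trans[OF sum_mono sum_mono2]) (auto simp: mult_nonneg_nonneg)
  also have "\<dots> = norm a ^ i * 2 ^ n * (\<Sum>k\<le>n. norm (coeff R k))"
    by (metis mult.commute sum_distrib_right)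
  finally show ?thesis .
qed

definition lagrange_basis :: "(nat \<Rightarrow> 'a::field) \<Rightarrow> nat \<Rightarrow> nat \<Rightarrow> 'a poly" where
  "lagrange_basis x n j =
     smult (inverse (\<Prod>l\<in>{..n} - {j}. x j - x l)) (\<Prod>l\<in>{..n} - {j}. [:- x l, 1:])"

lemma poly_lagrange_basis:
  assumes "inj_on x {..n}" "j \<le> n" "m \<le> n"
  shows "poly (lagrange_basis x n j) (x m) = (if m = j then 1 else 0)"
proof (cases "m = j")
  case True
  have "(\<Prod>l\<in>{..n} - {j}. x j - x l) \<noteq> 0"
    using assms by (auto dest: inj_onD)
  then show ?thesis
    using True by (simp add: lagrange_basis_def poly_prod)
next
  case False
  then have "(\<Prod>l\<in>{..n} - {j}. poly [:- x l, 1:] (x m)) = 0"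
    using assms(3) by (intro prod_zero) auto
  then show ?thesis
    using False by (simp add: lagrange_basis_def poly_prod)
qed

lemma degree_lagrange_basis:
  assumes "j \<le> n"
  shows "degree (lagrange_basis x n j) \<le> n"
proof -
  have "degree (\<Prod>l\<in>{..n} - {j}. [:- x l, 1:]) \<le> (\<Sum>l\<in>{..n} - {j}. degree [:- x l, 1:])"
    using degree_prod_sum_le[of "{..n} - {j}" "\<lambda>l. [:- x l, 1:]"] by (simp add: o_def)
  also have "\<dots> = n"
    using assms by simp
  finally show ?thesis
    by (simp add: lagrange_basis_def)
qed

lemma lagrange_interpolation:
  assumes "inj_on x {..n}" "degree T \<le> n"
  shows "T = (\<Sum>j\<le>n. smult (poly T (x j)) (lagrange_basis x n j))"
proof (rule poly_eqI_degree[where A = "x ` {..n}"])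
  have card_nodes: "card (x ` {..n}) = n + 1"
    using assms(1) by (simp add: card_image)
  then show "degree T < card (x ` {..n})"
    using assms(2) by simp
  have "degree (\<Sum>j\<le>n. smult (poly T (x j)) (lagrange_basis x n j)) \<le> n"
    by (intro degree_sum_le) (auto intro: order_trans[OF degree_smult_le] degree_lagrange_basis)
  then show "degree (\<Sum>j\<le>n. smult (poly T (x j)) (lagrange_basis x n j)) < card (x ` {..n})"
    using card_nodes by simp
  fix y
  assume "y \<in> x ` {..n}"
  then obtain m where m: "m \<le> n" "y = x m"
    by auto
  have "poly (\<Sum>j\<le>n. smult (poly T (x j)) (lagrange_basis x n j)) y
      = (\<Sum>j\<le>n. poly T (x j) * (if m = j then 1 else 0))"
    using m assms(1) by (auto simp: poly_sum poly_lagrange_basis intro!: sum.cong)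
  then show "poly T y = poly (\<Sum>j\<le>n. smult (poly T (x j)) (lagrange_basis x n j)) y"
    using m by (simp add: if_distrib[of "\<lambda>v. _ * v"] cong: if_cong)
qed

lemma sum_norm_coeff_le_sum_norm_poly:
  fixes x :: "nat \<Rightarrow> 'a::real_normed_field"
  assumes "inj_on x {..n}"
  shows "\<exists>M>0. \<forall>T. degree T \<le> n \<longrightarrow>
           (\<Sum>k\<le>n. norm (coeff T k)) \<le> M * (\<Sum>j\<le>n. norm (poly T (x j)))"
proof -
  define B where "B = (\<Sum>j\<le>n. \<Sum>k\<le>n. norm (coeff (lagrange_basis x n j) k))"
  have B_ge: "norm (coeff (lagrange_basis x n j) k) \<le> B" if "j \<le> n" "k \<le> n" for j k
  proof -
    have "norm (coeff (lagrange_basis x n j) k) \<le> (\<Sum>k\<le>n. norm (coeff (lagrange_basis x n j) k))"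
      using that by (intro member_le_sum) auto
    also have "\<dots> \<le> B"
      unfolding B_def using that by (intro member_le_sum sum_nonneg) auto
    finally show ?thesis .
  qed
  have "0 \<le> B"
    unfolding B_def by (intro sum_nonneg) auto
  have "(\<Sum>k\<le>n. norm (coeff T k)) \<le> ((real n + 1) * B + 1) * (\<Sum>j\<le>n. norm (poly T (x j)))"
    if "degree T \<le> n" for T :: "'a poly"
  proof -
    define S where "S = (\<Sum>j\<le>n. norm (poly T (x j)))"
    have coeff_le: "norm (coeff T k) \<le> B * S" if "k \<le> n" for k
    proof -
      have "coeff T k = (\<Sum>j\<le>n. poly T (x j) * coeff (lagrange_basis x n j) k)"
        by (subst lagrange_interpolation[OF assms \<open>degree T \<le> n\<close>]) (simp add: coeff_sum)
      then have "norm (coeff T k) \<le> (\<Sum>j\<le>n. norm (poly T (x j)) * norm (coeff (lagrange_basis x n j) k))"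
        by (metis (no_types, lifting) norm_mult norm_sum sum.cong)
      also have "\<dots> \<le> (\<Sum>j\<le>n. norm (poly T (x j)) * B)"
        using B_ge that by (intro sum_mono mult_left_mono) auto
      finally show ?thesis
        by (simp add: S_def sum_distrib_left mult.commute)
    qed
    have "(\<Sum>k\<le>n. norm (coeff T k)) \<le> (\<Sum>k\<le>n. B * S)"
      using coeff_le by (intro sum_mono) auto
    also have "\<dots> \<le> ((real n + 1) * B + 1) * S"
      using \<open>0 \<le> B\<close> by (simp add: S_def algebra_simps sum_nonneg)
    finally show ?thesis
      by (simp add: S_def)
  qed
  moreover have "0 < (real n + 1) * B + 1"
    using \<open>0 \<le> B\<close> by (simp add: add_nonneg_pos)
  ultimately show ?thesis
    by blast
qed

definition poly_of_coeffs :: "(nat \<Rightarrow> 'a::comm_semiring_1) \<Rightarrow> nat \<Rightarrow> 'a poly" where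
  "poly_of_coeffs c n = (\<Sum>i\<le>n. monom (c i) i)"

lemma coeff_poly_of_coeffs: "i \<le> n \<Longrightarrow> coeff (poly_of_coeffs c n) i = c i"
  by (simp add: poly_of_coeffs_def coeff_sum)

lemma degree_poly_of_coeffs: "degree (poly_of_coeffs c n) \<le> n"
  unfolding poly_of_coeffs_def by (intro degree_sum_le) (auto intro: order_trans[OF degree_monom_le])

lemma poly_poly_of_coeffs: "poly (poly_of_coeffs c n) u = (\<Sum>i\<le>n. c i * u ^ i)"
  by (simp add: poly_of_coeffs_def poly_sum poly_monom)

lemma poly_pderiv_poly_of_coeffs:
  "poly (pderiv (poly_of_coeffs c n)) u = (\<Sum>i\<le>n. of_nat i * c i * u ^ (i - 1))"
  by (simp add: poly_of_coeffs_def higher_pderiv_sum[where n = 1, simplified] pderiv_monom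
      poly_sum poly_monom mult_ac)

definition euler_op :: "'a::{comm_semiring_1,semiring_no_zero_divisors} \<Rightarrow> 'a poly \<Rightarrow> 'a poly" where
  "euler_op a R = smult a R + pCons 0 (pderiv R)"

lemma coeff_euler_op: "coeff (euler_op a R) k = (a + of_nat k) * coeff R k"
  by (cases k) (simp_all add: euler_op_def coeff_pderiv algebra_simps)

lemma degree_euler_op: "degree R \<le> n \<Longrightarrow> degree (euler_op a R) \<le> n"
  by (intro degree_le) (auto simp: coeff_euler_op coeff_eq_0)

lemma poly_euler_op: "poly (euler_op a R) y = a * poly R y + y * poly (pderiv R) y"
  by (simp add: euler_op_def)

lemma norm_coeff_euler_op_ge:
  fixes R :: "'a::real_normed_field poly"
  assumes "a \<ge> 0"
  shows "a * norm (coeff R k) \<le> norm (coeff (euler_op (of_real a) R) k)"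
proof -
  have "norm (of_real a + of_nat k :: 'a) = norm (of_real (a + real k) :: 'a)"
    by simp
  also have "\<dots> = a + real k"
    unfolding norm_of_real using assms by simp
  finally have "norm (of_real a + of_nat k :: 'a) = a + real k" .
  then show ?thesis
    by (simp add: coeff_euler_op norm_mult mult_right_mono)
qed

definition recentred :: "'a::field poly \<Rightarrow> 'a \<Rightarrow> 'a \<Rightarrow> 'a poly" where
  "recentred P b t = pcompose P [:- 1 / b, 1 / (b * t):]"

lemma degree_recentred: "degree (recentred P b t) \<le> degree P"
proof -
  have "degree [:- 1 / b, 1 / (b * t):] \<le> 1"
    by simp
  then show ?thesis
    unfolding recentred_def by (metis degree_pcompose_le mult.right_neutral mult_le_mono2 order_trans)
qed

lemma pcompose_recentred:
  assumes "b \<noteq> 0" "t \<noteq> 0"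
  shows "pcompose (recentred P b t) [:t, t * b:] = P"
proof -
  have "pcompose [:- 1 / b, 1 / (b * t):] [:t, t * b:] = [:0, 1:]"
    using assms by (simp add: pcompose_pCons field_simps)
  then show ?thesis
    by (simp add: recentred_def flip: pcompose_assoc)
qed

lemma euler_op_recentred:
  fixes a b t u :: "'a::field"
  assumes "b \<noteq> 0" "t \<noteq> 0"
  shows "b * poly (euler_op a (recentred P b t)) (t * (1 + b * u))
           = a * b * poly P u + (1 + b * u) * poly (pderiv P) u"
proof -
  have affine: "poly [:- 1 / b, 1 / (b * t):] (t * (1 + b * u)) = u"
    using assms by (simp add: field_simps)
  have "poly (recentred P b t) (t * (1 + b * u)) = poly P u"
    by (simp only: recentred_def poly_pcompose affine)
  moreover have "pderiv [:- 1 / b, 1 / (b * t):] = [:1 / (b * t):]"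
    by (simp add: pderiv_pCons)
  then have "poly (pderiv (recentred P b t)) (t * (1 + b * u)) = poly (pderiv P) u * (1 / (b * t))"
    by (simp only: recentred_def pderiv_pcompose poly_mult poly_pcompose affine) simp
  ultimately show ?thesis
    using assms by (simp add: poly_euler_op field_simps)
qed

section \<open>The Bloch norm of the kernels\<close>

lemma bloch_norm_le:
  assumes "\<And>z. z \<in> ball 0 1 \<Longrightarrow> (f has_field_derivative f' z) (at z)"
    and "\<And>z. z \<in> ball 0 1 \<Longrightarrow> (1 - norm z ^ 2) powr \<alpha> * norm (f' z) \<le> B"
  shows "bloch_norm \<alpha> f \<le> norm (f 0) + B"
proof -
  have "(SUP z\<in>ball 0 1. (1 - (norm z)\<^sup>2) powr \<alpha> * norm (deriv f z)) \<le> B"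
    using assms by (intro cSUP_least) (auto simp: DERIV_imp_deriv[OF assms(1)])
  then show ?thesis
    by (simp add: bloch_norm_def)
qed

lemma weighted_deriv_le_bloch_norm:
  assumes "\<And>z. z \<in> ball 0 1 \<Longrightarrow> (f has_field_derivative f' z) (at z)"
    and "\<And>z. z \<in> ball 0 1 \<Longrightarrow> (1 - norm z ^ 2) powr \<alpha> * norm (f' z) \<le> B"
    and "z \<in> ball 0 1"
  shows "(1 - norm z ^ 2) powr \<alpha> * norm (f' z) \<le> bloch_norm \<alpha> f"
proof -
  have "bdd_above ((\<lambda>z. (1 - (norm z)\<^sup>2) powr \<alpha> * norm (deriv f z)) ` ball 0 1)"
    using assms(1,2) by (intro bdd_aboveI2[where M = B]) (auto simp: DERIV_imp_deriv[OF assms(1)])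
  from cSUP_upper[OF assms(3) this] show ?thesis
    using DERIV_imp_deriv[OF assms(1)[OF assms(3)]] by (simp add: bloch_norm_def add_increasing)
qed

lemma Re_one_minus_cnj_mult_pos:
  assumes "norm w < 1" "norm z < 1"
  shows "0 < Re (1 - cnj w * z)"
proof -
  have "\<bar>Re (cnj w * z)\<bar> \<le> norm w * norm z"
    using abs_Re_le_cmod[of "cnj w * z"] by (simp add: norm_mult)
  also have "\<dots> < 1"
    using assms mult_left_le[of "norm z" "norm w"] by simp
  finally show ?thesis
    by simp
qed

lemma norm_one_minus_cnj_mult_bounds:
  assumes "norm w < 1" "norm z < 1"
  shows "0 < norm (1 - cnj w * z)" "norm (1 - cnj w * z) \<le> 2"
    and "1 - norm w \<le> norm (1 - cnj w * z)" "1 - norm z ^ 2 \<le> 2 * norm (1 - cnj w * z)"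
proof -
  show "0 < norm (1 - cnj w * z)"
    using Re_one_minus_cnj_mult_pos[OF assms] complex_Re_le_cmod[of "1 - cnj w * z"] by linarith
  have wz: "norm (cnj w * z) = norm w * norm z" "norm w * norm z \<le> norm w" "norm w * norm z \<le> norm z"
    using assms by (simp_all add: norm_mult mult_left_le mult_left_le_one_le)
  show "norm (1 - cnj w * z) \<le> 2"
    using norm_triangle_ineq4[of 1 "cnj w * z"] wz assms by simp
  have lower: "1 - norm w * norm z \<le> norm (1 - cnj w * z)"
    using norm_triangle_ineq2[of 1 "cnj w * z"] wz by simp
  then show "1 - norm w \<le> norm (1 - cnj w * z)"
    using wz by linarith
  have "1 - norm z ^ 2 \<le> 2 * (1 - norm z)"
    using zero_le_power2[of "1 - norm z"] by (simp add: power2_eq_square algebra_simps)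
  also have "\<dots> \<le> 2 * norm (1 - cnj w * z)"
    using lower wz(3) by argo
  finally show "1 - norm z ^ 2 \<le> 2 * norm (1 - cnj w * z)" .
qed

definition dfw :: "real \<Rightarrow> complex \<Rightarrow> nat \<Rightarrow> complex \<Rightarrow> complex" where
  "dfw \<alpha> w i z = of_nat i * z ^ (i - 1) * (1 - cnj w * z) powr (- of_real (\<alpha> + real i))
     + of_real (\<alpha> + real i) * cnj w * z ^ i * (1 - cnj w * z) powr (- of_real (\<alpha> + real i) - 1)"

lemma fw_has_field_derivative:
  assumes "norm w < 1" "norm z < 1"
  shows "(fw \<alpha> w i has_field_derivative dfw \<alpha> w i z) (at z)"
proof -
  define s where "s = - complex_of_real (\<alpha> + real i)"
  have fw_eq: "fw \<alpha> w i = (\<lambda>z. z ^ i * (1 - cnj w * z) powr s)"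
    unfolding s_def by (rule ext, unfold fw_def powr_minus, simp add: divide_inverse)
  have "1 - cnj w * z \<notin> \<real>\<^sub>\<le>\<^sub>0"
    using Re_one_minus_cnj_mult_pos[OF assms] by (auto simp: complex_nonpos_Reals_iff)
  then have "((\<lambda>z. (1 - cnj w * z) powr s) has_field_derivative
               s * (1 - cnj w * z) powr (s - 1) * (- cnj w)) (at z)"
    by (intro DERIV_chain2[OF has_field_derivative_powr]) (auto intro!: derivative_eq_intros)
  moreover have "((\<lambda>z. z ^ i) has_field_derivative of_nat i * z ^ (i - 1)) (at z)"
    using DERIV_power[OF DERIV_ident, of i z UNIV] by simp
  ultimately show ?thesis
    unfolding fw_eq by (rule DERIV_cong[OF DERIV_mult[rotated]]) (simp add: dfw_def s_def algebra_simps)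
qed

lemma norm_dfw_le:
  assumes "norm w < 1" "norm z < 1" "\<alpha> > 0"
  shows "norm (dfw \<alpha> w i z) \<le> (3 * real i + \<alpha>) * norm (1 - cnj w * z) powr (- \<alpha> - real i - 1)"
proof -
  define x where "x = norm (1 - cnj w * z)"
  define a where "a = \<alpha> + real i"
  note x_bounds = norm_one_minus_cnj_mult_bounds[OF assms(1,2), folded x_def]
  have norm_powr: "norm ((1 - cnj w * z) powr (- of_real a)) = x powr (- a)"
    "norm ((1 - cnj w * z) powr (- of_real a - 1)) = x powr (- a - 1)"
    by (simp_all add: norm_powr_real_powr' x_def)
  have "norm (of_real a :: complex) = a"
    unfolding norm_of_real using assms(3) by (simp add: a_def)
  then have "norm (dfw \<alpha> w i z)
      \<le> real i * norm z ^ (i - 1) * x powr (- a) + a * norm w * norm z ^ i * x powr (- a - 1)"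
    unfolding dfw_def a_def[symmetric]
    by (intro order_trans[OF norm_triangle_ineq] add_mono) (simp_all add: norm_mult norm_power norm_powr)
  also have "\<dots> \<le> real i * x powr (- a) + a * x powr (- a - 1)"
    using assms by (intro add_mono mult_right_mono)
      (auto simp: a_def power_le_one mult_left_le mult_le_one mult.assoc intro!: mult_left_le_one_le)
  also have "x powr (- a) = x * x powr (- a - 1)"
    using x_bounds(1) by (simp add: powr_mult_base)
  also have "real i * (x * x powr (- a - 1)) + a * x powr (- a - 1) = (real i * x + a) * x powr (- a - 1)"
    by (simp add: algebra_simps)
  also have "\<dots> \<le> (3 * real i + \<alpha>) * x powr (- a - 1)"
    using x_bounds(2) by (intro mult_right_mono) (auto simp: a_def mult.commute[of "real i"] mult_right_mono)
  finally show ?thesis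
    by (simp add: x_def a_def)
qed

lemma weighted_dfw_le:
  assumes "norm w < 1" "norm z < 1" "\<alpha> > 0"
  shows "(1 - norm z ^ 2) powr \<alpha> * norm (dfw \<alpha> w i z) \<le> 2 powr \<alpha> * (3 * real i + \<alpha>) / (1 - norm w) ^ (i + 1)"
proof -
  define x where "x = norm (1 - cnj w * z)"
  note x_bounds = norm_one_minus_cnj_mult_bounds[OF assms(1,2), folded x_def]
  have "(1 - norm z ^ 2) powr \<alpha> \<le> (2 * x) powr \<alpha>"
    using x_bounds(4) assms by (intro powr_mono2) (auto simp: abs_square_le_1 less_imp_le)
  then have "(1 - norm z ^ 2) powr \<alpha> * norm (dfw \<alpha> w i z)
      \<le> (2 * x) powr \<alpha> * ((3 * real i + \<alpha>) * x powr (- \<alpha> - real i - 1))"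
    using norm_dfw_le[OF assms, of i] by (intro mult_mono) (auto simp: x_def)
  also have "\<dots> = 2 powr \<alpha> * (3 * real i + \<alpha>) * (x powr \<alpha> * x powr (- \<alpha> - real i - 1))"
    using x_bounds(1) by (simp add: powr_mult)
  also have "x powr \<alpha> * x powr (- \<alpha> - real i - 1) = x powr (- real (i + 1))"
    by (simp only: powr_add[symmetric]) (simp add: algebra_simps)
  also have "\<dots> = 1 / x ^ (i + 1)"
    by (simp only: powr_minus_divide powr_realpow[OF x_bounds(1)])
  also have "2 powr \<alpha> * (3 * real i + \<alpha>) * (1 / x ^ (i + 1))
      \<le> 2 powr \<alpha> * (3 * real i + \<alpha>) / (1 - norm w) ^ (i + 1)"
  proof -
    have "(1 - norm w) ^ (i + 1) \<le> x ^ (i + 1)"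
      using x_bounds(3) assms(1) by (intro power_mono) auto
    then have "2 powr \<alpha> * (3 * real i + \<alpha>) / x ^ (i + 1)
        \<le> 2 powr \<alpha> * (3 * real i + \<alpha>) / (1 - norm w) ^ (i + 1)"
      using assms x_bounds(1) by (intro divide_left_mono mult_pos_pos) auto
    then show ?thesis
      by simp
  qed
  finally show ?thesis .
qed

lemma bloch_norm_fw_le:
  assumes "norm w < 1" "\<alpha> > 0"
  shows "bloch_norm \<alpha> (fw \<alpha> w i) \<le> (1 + 2 powr \<alpha> * (3 * real i + \<alpha>)) * (2 / (1 - norm w ^ 2)) ^ (i + 1)"
proof -
  define K where "K = 2 powr \<alpha> * (3 * real i + \<alpha>)"
  define q where "q = 2 / (1 - norm w ^ 2)"
  have "0 < 1 - norm w ^ 2"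
    using assms(1) by (simp add: power_less_one_iff abs_square_less_1)
  moreover have "1 - norm w ^ 2 \<le> 2 * (1 - norm w)"
    using zero_le_power2[of "1 - norm w"] by (simp add: power2_eq_square algebra_simps)
  ultimately have "1 / (1 - norm w) \<le> q" "1 \<le> q"
    using assms(1) by (auto simp: q_def field_simps)
  have "norm (fw \<alpha> w i 0) \<le> 1"
    by (simp add: fw_def power_0_left)
  then have "bloch_norm \<alpha> (fw \<alpha> w i) \<le> 1 + K / (1 - norm w) ^ (i + 1)"
    using assms fw_has_field_derivative weighted_dfw_le
    by (intro order_trans[OF bloch_norm_le[where B = "K / (1 - norm w) ^ (i + 1)"]]) (auto simp: K_def)
  also have "K / (1 - norm w) ^ (i + 1) = K * (1 / (1 - norm w)) ^ (i + 1)"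
    by (simp add: power_one_over)
  also have "\<dots> \<le> K * q ^ (i + 1)"
    using \<open>1 / (1 - norm w) \<le> q\<close> assms by (intro mult_left_mono power_mono) (auto simp: K_def)
  also have "1 + K * q ^ (i + 1) \<le> (1 + K) * q ^ (i + 1)"
    using one_le_power[OF \<open>1 \<le> q\<close>, of "i + 1"] by (simp add: algebra_simps)
  finally show ?thesis
    by (simp add: K_def q_def)
qed

lemma weighted_deriv_fw_sum_le_bloch_norm:
  assumes "norm w < 1" "norm z < 1" "\<alpha> > 0"
  shows "(1 - norm z ^ 2) powr \<alpha> * norm (\<Sum>i\<le>n. c i * dfw \<alpha> w i z)
           \<le> bloch_norm \<alpha> (\<lambda>z. \<Sum>i\<le>n. c i * fw \<alpha> w i z)"
proof (rule weighted_deriv_le_bloch_norm)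
  show "((\<lambda>z. \<Sum>i\<le>n. c i * fw \<alpha> w i z) has_field_derivative (\<Sum>i\<le>n. c i * dfw \<alpha> w i z)) (at z)"
    if "z \<in> ball 0 1" for z
    using assms(1) that by (auto intro!: DERIV_sum DERIV_cmult fw_has_field_derivative)
  show "(1 - norm z ^ 2) powr \<alpha> * norm (\<Sum>i\<le>n. c i * dfw \<alpha> w i z)
      \<le> (\<Sum>i\<le>n. norm (c i) * (2 powr \<alpha> * (3 * real i + \<alpha>) / (1 - norm w) ^ (i + 1)))"
    if "z \<in> ball 0 1" for z
  proof -
    have "(1 - norm z ^ 2) powr \<alpha> * norm (\<Sum>i\<le>n. c i * dfw \<alpha> w i z)
        \<le> (1 - norm z ^ 2) powr \<alpha> * (\<Sum>i\<le>n. norm (c i) * norm (dfw \<alpha> w i z))"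
      by (intro mult_left_mono order_trans[OF norm_sum]) (auto simp: norm_mult)
    also have "\<dots> = (\<Sum>i\<le>n. norm (c i) * ((1 - norm z ^ 2) powr \<alpha> * norm (dfw \<alpha> w i z)))"
      by (simp add: sum_distrib_left mult_ac)
    also have "\<dots> \<le> (\<Sum>i\<le>n. norm (c i) * (2 powr \<alpha> * (3 * real i + \<alpha>) / (1 - norm w) ^ (i + 1)))"
      using assms that weighted_dfw_le by (intro sum_mono mult_left_mono) auto
    finally show ?thesis .
  qed
qed (use assms in simp)

section \<open>Evaluation at real points of the ray through w\<close>

lemma dfw_at_real_point:
  assumes "1 - cnj w * z = of_real \<rho>" "\<rho> > 0"
  shows "dfw \<alpha> w i z = of_real (\<rho> powr (- \<alpha> - 1)) *
           (of_nat i * (z / of_real \<rho>) ^ (i - 1) + of_real (\<alpha> + real i) * cnj w * (z / of_real \<rho>) ^ i)"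
proof -
  have "(1 - cnj w * z) powr (- of_real (\<alpha> + real i)) = of_real (\<rho> powr (- (\<alpha> + real i)))"
    using assms by (simp add: powr_of_real[symmetric])
  also have "- (\<alpha> + real i) = (- \<alpha> - 1) + 1 - real i"
    by simp
  also have "\<rho> powr \<dots> = \<rho> powr (- \<alpha> - 1) * \<rho> / \<rho> ^ i"
    using assms(2) by (simp add: powr_add powr_diff powr_realpow)
  finally have first: "(1 - cnj w * z) powr (- of_real (\<alpha> + real i)) = of_real (\<rho> powr (- \<alpha> - 1) * \<rho> / \<rho> ^ i)" .
  have "(1 - cnj w * z) powr (- of_real (\<alpha> + real i) - 1) = of_real (\<rho> powr (- (\<alpha> + real i) - 1))"
    using assms by (simp add: powr_of_real[symmetric])
  also have "\<rho> powr (- (\<alpha> + real i) - 1) = \<rho> powr (- \<alpha> - 1) / \<rho> ^ i"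
    using assms(2) by (simp add: powr_diff[symmetric] powr_realpow[symmetric] algebra_simps)
  finally have second: "(1 - cnj w * z) powr (- of_real (\<alpha> + real i) - 1) = of_real (\<rho> powr (- \<alpha> - 1) / \<rho> ^ i)" .
  show ?thesis
    using assms(2) unfolding dfw_def first second
    by (cases i) (simp_all add: power_divide field_simps)
qed

lemma sum_dfw_eq_euler_op:
  assumes "1 - cnj w * z = of_real \<rho>" "\<rho> > 0" "w \<noteq> 0" "t \<noteq> 0"
  shows "(\<Sum>i\<le>n. c i * dfw \<alpha> w i z) = of_real (\<rho> powr (- \<alpha> - 1)) *
           (cnj w * poly (euler_op (of_real \<alpha>) (recentred (poly_of_coeffs c n) (cnj w) (of_real t))) (of_real (t / \<rho>)))"
proof -
  define u where "u = z / of_real \<rho>"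
  define P where "P = poly_of_coeffs c n"
  define r where "r = complex_of_real (\<rho> powr (- \<alpha> - 1))"
  have summand: "c i * (of_nat i * u ^ (i - 1) + of_real (\<alpha> + real i) * cnj w * u ^ i)
      = of_real \<alpha> * cnj w * (c i * u ^ i) + (1 + cnj w * u) * (of_nat i * c i * u ^ (i - 1))" for i
    by (cases i) (auto simp: algebra_simps)
  have "(\<Sum>i\<le>n. c i * dfw \<alpha> w i z)
      = r * (\<Sum>i\<le>n. of_real \<alpha> * cnj w * (c i * u ^ i) + (1 + cnj w * u) * (of_nat i * c i * u ^ (i - 1)))"
    unfolding dfw_at_real_point[OF assms(1,2)] u_def[symmetric] r_def[symmetric] summand[symmetric]
    by (simp add: sum_distrib_left mult_ac)
  also have "\<dots> = r * (of_real \<alpha> * cnj w * poly P u + (1 + cnj w * u) * poly (pderiv P) u)"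
    by (simp add: P_def poly_poly_of_coeffs poly_pderiv_poly_of_coeffs sum.distrib sum_distrib_left)
  also have "of_real \<alpha> * cnj w * poly P u + (1 + cnj w * u) * poly (pderiv P) u
      = cnj w * poly (euler_op (of_real \<alpha>) (recentred P (cnj w) (of_real t))) (of_real t * (1 + cnj w * u))"
    using assms by (simp add: euler_op_recentred)
  also have "of_real t * (1 + cnj w * u) = of_real (t / \<rho>)"
    using assms by (simp add: u_def field_simps)
  finally show ?thesis
    by (simp add: P_def r_def)
qed

lemma real_point_on_ray:
  fixes w :: complex
  assumes "w \<noteq> 0" "1 - norm w ^ 2 \<le> \<rho>" "\<rho> \<le> 1"
  obtains z where "1 - cnj w * z = of_real \<rho>" "\<rho> \<le> 1 - norm z ^ 2"
proof
  define s where "s = norm w"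
  define z where "z = w * of_real ((1 - \<rho>) / s ^ 2)"
  have "s > 0"
    using assms(1) by (simp add: s_def)
  have "cnj w * w = of_real (s ^ 2)"
    by (metis complex_norm_square mult.commute s_def)
  then have "cnj w * z = of_real (s ^ 2 * ((1 - \<rho>) / s ^ 2))"
    by (simp add: z_def mult.assoc[symmetric])
  then show "1 - cnj w * z = of_real \<rho>"
    using \<open>s > 0\<close> by simp
  have "norm z = s * \<bar>(1 - \<rho>) / s ^ 2\<bar>"
    unfolding z_def norm_mult norm_of_real s_def ..
  then have norm_z: "norm z = (1 - \<rho>) / s"
    using \<open>s > 0\<close> assms(3) by (simp add: power2_eq_square)
  then have "norm z \<le> s"
    using \<open>s > 0\<close> assms(2) by (simp add: divide_le_eq s_def power2_eq_square)
  then have "norm z ^ 2 \<le> s * norm z"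
    by (simp add: power2_eq_square mult_right_mono)
  moreover have "\<rho> = 1 - s * norm z"
    using norm_z \<open>s > 0\<close> by (simp add: field_simps)
  ultimately show "\<rho> \<le> 1 - norm z ^ 2"
    by simp
qed

lemma norm_euler_op_le_bloch_norm:
  assumes "\<alpha> > 0" "w \<noteq> 0" "norm w < 1" "1 - norm w ^ 2 < y" "y \<le> 1"
  shows "norm w * y * norm (poly (euler_op (of_real \<alpha>)
             (recentred (poly_of_coeffs c n) (cnj w) (of_real (1 - norm w ^ 2)))) (of_real y))
           \<le> (1 - norm w ^ 2) * bloch_norm \<alpha> (\<lambda>z. \<Sum>i\<le>n. c i * fw \<alpha> w i z)"
proof -
  define t where "t = 1 - norm w ^ 2"
  \<comment> \<open>with this choice the evaluation point \<open>t / \<rho>\<close> of \<open>sum_dfw_eq_euler_op\<close> is \<open>y\<close>\<close>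
  define \<rho> where "\<rho> = t / y"
  define E where "E = poly (euler_op (of_real \<alpha>) (recentred (poly_of_coeffs c n) (cnj w) (of_real t))) (of_real y)"
  have t: "0 < t" "t < y"
    using assms by (auto simp: t_def abs_square_less_1)
  have \<rho>: "0 < \<rho>" "t \<le> \<rho>" "\<rho> \<le> 1"
    using t assms(5) by (auto simp: \<rho>_def field_simps)
  obtain z where real_point: "1 - cnj w * z = of_real \<rho>" and "\<rho> \<le> 1 - norm z ^ 2"
    using real_point_on_ray[OF assms(2) \<rho>(2,3)[unfolded t_def]] by blast
  then have "norm z ^ 2 < 1"
    using \<rho>(1) by linarith
  then have "norm z < 1"
    by (metis abs_norm_cancel abs_square_less_1)
  have "\<rho> powr \<alpha> * (\<rho> powr (- \<alpha> - 1) * norm w * norm E)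
      \<le> (1 - norm z ^ 2) powr \<alpha> * norm (\<Sum>i\<le>n. c i * dfw \<alpha> w i z)"
    using sum_dfw_eq_euler_op[OF real_point \<rho>(1) assms(2), where t = t and n = n and c = c and \<alpha> = \<alpha>]
      t \<rho> \<open>\<rho> \<le> 1 - norm z ^ 2\<close> assms(1)
    by (auto simp: \<rho>_def E_def norm_mult intro!: mult_right_mono powr_mono2)
  also have "\<dots> \<le> bloch_norm \<alpha> (\<lambda>z. \<Sum>i\<le>n. c i * fw \<alpha> w i z)"
    by (rule weighted_deriv_fw_sum_le_bloch_norm[OF assms(3) \<open>norm z < 1\<close> assms(1)])
  also have "\<rho> powr \<alpha> * \<rho> powr (- \<alpha> - 1) = y / t"
    using \<rho> t by (simp add: powr_add[symmetric] powr_minus_divide \<rho>_def)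
  then have "\<rho> powr \<alpha> * (\<rho> powr (- \<alpha> - 1) * norm w * norm E) = norm w * y * norm E / t"
    by (simp only: mult.assoc[symmetric]) (simp add: field_simps)
  finally show ?thesis
    using t by (simp add: E_def t_def field_simps)
qed

lemma norm_euler_op_at_node_le:
  assumes "\<alpha> > 0" "1/2 < norm w" "norm w < 1" "3/4 \<le> y" "y \<le> 1"
  shows "norm (poly (euler_op (of_real \<alpha>)
             (recentred (poly_of_coeffs c n) (cnj w) (of_real (1 - norm w ^ 2)))) (of_real y))
           \<le> 8/3 * (1 - norm w ^ 2) * bloch_norm \<alpha> (\<lambda>z. \<Sum>i\<le>n. c i * fw \<alpha> w i z)"
    (is "?E \<le> 8/3 * ?t * ?G")
proof -
  have "1/2 * (1/2) < norm w * norm w"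
    using assms(2) by (intro mult_strict_mono) auto
  then have "w \<noteq> 0" and node: "1 - norm w ^ 2 < y"
    using assms(2,4) by (auto simp: power2_eq_square)
  have "1/2 * (3/4) \<le> norm w * y"
    using assms by (intro mult_mono) auto
  then have "3/8 * ?E \<le> norm w * y * ?E"
    by (intro mult_right_mono) auto
  also have "\<dots> \<le> ?t * ?G"
    by (rule norm_euler_op_le_bloch_norm[OF assms(1) \<open>w \<noteq> 0\<close> assms(3) node assms(5)])
  finally show ?thesis
    by (simp only: mult.assoc)
qed

lemma sum_norm_mult_bloch_norm_fw_le:
  fixes c :: "nat \<Rightarrow> complex" and w :: complex
  defines "t \<equiv> 1 - norm w ^ 2"
  assumes "\<alpha> > 0" "w \<noteq> 0" "norm w < 1"
  shows "(\<Sum>i\<le>n. norm (c i) * bloch_norm \<alpha> (fw \<alpha> w i))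
           \<le> (real n + 1) * 2 ^ (2 * n + 1) * (1 + 2 powr \<alpha> * (3 * real n + \<alpha>))
               * (\<Sum>k\<le>n. norm (coeff (recentred (poly_of_coeffs c n) (cnj w) (of_real t)) k)) / t"
proof -
  define R where "R = recentred (poly_of_coeffs c n) (cnj w) (of_real t)"
  define K where "K = 1 + 2 powr \<alpha> * (3 * real n + \<alpha>)"
  define S where "S = (\<Sum>k\<le>n. norm (coeff R k))"
  have t: "0 < t" "t \<le> 1"
    using assms by (auto simp: t_def abs_square_less_1)
  have "degree R \<le> n"
    unfolding R_def using degree_recentred degree_poly_of_coeffs by (rule order_trans)
  have summand_le: "norm (c i) * bloch_norm \<alpha> (fw \<alpha> w i) \<le> 2 ^ (2 * n + 1) * K * S / t" if "i \<le> n" for i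
  proof -
    have "c i = coeff (pcompose R [:of_real t, of_real t * cnj w:]) i"
      using assms(3) t that by (simp add: R_def pcompose_recentred coeff_poly_of_coeffs)
    then have c_le: "norm (c i) \<le> t ^ i * 2 ^ n * S"
      using norm_coeff_pcompose_affine_le[OF \<open>degree R \<le> n\<close>, of "of_real t" "cnj w" i] assms(4) t
      by (simp add: S_def)
    have "bloch_norm \<alpha> (fw \<alpha> w i) \<le> (1 + 2 powr \<alpha> * (3 * real i + \<alpha>)) * (2 / t) ^ (i + 1)"
      using bloch_norm_fw_le[OF assms(4,2)] by (simp add: t_def)
    also have "\<dots> \<le> K * (2 ^ (n + 1) / t ^ (i + 1))"
      using that t assms(2)
      by (intro mult_mono) (auto simp: K_def power_divide divide_right_mono power_increasing)
    finally have "norm (c i) * bloch_norm \<alpha> (fw \<alpha> w i) \<le> norm (c i) * (K * (2 ^ (n + 1) / t ^ (i + 1)))"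
      by (rule mult_left_mono) simp
    also have "\<dots> \<le> (t ^ i * 2 ^ n * S) * (K * (2 ^ (n + 1) / t ^ (i + 1)))"
      using c_le t assms(2) by (intro mult_right_mono) (auto simp: K_def)
    also have "\<dots> = (2 ^ n * 2 ^ (n + 1)) * K * S / t"
      using t by (simp add: divide_simps)
    also have "(2::real) ^ n * 2 ^ (n + 1) = 2 ^ (2 * n + 1)"
      by (simp flip: power_add)
    finally show ?thesis .
  qed
  have "(\<Sum>i\<le>n. norm (c i) * bloch_norm \<alpha> (fw \<alpha> w i)) \<le> (\<Sum>i\<le>n. 2 ^ (2 * n + 1) * K * S / t)"
    using summand_le by (intro sum_mono) auto
  then show ?thesis
    by (simp add: R_def K_def S_def mult_ac add.commute)
qed

lemma sum_norm_coeff_recentred_le: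
  assumes "\<alpha> > 0"
  shows "\<exists>B>0. \<forall>(c :: nat \<Rightarrow> complex) w. 1/2 < norm w \<longrightarrow> norm w < 1 \<longrightarrow>
           (\<Sum>k\<le>n. norm (coeff (recentred (poly_of_coeffs c n) (cnj w) (of_real (1 - norm w ^ 2))) k))
             \<le> B * (1 - norm w ^ 2) * bloch_norm \<alpha> (\<lambda>z. \<Sum>i\<le>n. c i * fw \<alpha> w i z)"
proof -
  define y where "y j = 1 - real j / (4 * (real n + 1))" for j
  have y: "3/4 \<le> y j" "y j \<le> 1" if "j \<le> n" for j
    using that by (auto simp: y_def divide_simps)
  have "inj_on (\<lambda>j. complex_of_real (y j)) {..n}"
    by (intro inj_onI) (simp only: y_def of_real_eq_iff, simp add: field_simps)
  from sum_norm_coeff_le_sum_norm_poly[OF this] obtain M where "M > 0" and M: "\<forall>T :: complex poly.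
      degree T \<le> n \<longrightarrow> (\<Sum>k\<le>n. norm (coeff T k)) \<le> M * (\<Sum>j\<le>n. norm (poly T (of_real (y j))))"
    by blast
  have "(\<Sum>k\<le>n. norm (coeff R k)) \<le> (M * (real n + 1) * (8/3) / \<alpha>) * t * G"
    if "1/2 < norm w" "norm w < 1" and t: "t = 1 - norm w ^ 2"
      and R: "R = recentred (poly_of_coeffs c n) (cnj w) (of_real t)"
      and G: "G = bloch_norm \<alpha> (\<lambda>z. \<Sum>i\<le>n. c i * fw \<alpha> w i z)" for c :: "nat \<Rightarrow> complex" and w t R G
  proof -
    have "degree R \<le> n"
      unfolding R using degree_recentred degree_poly_of_coeffs by (rule order_trans)
    have "\<alpha> * (\<Sum>k\<le>n. norm (coeff R k)) \<le> (\<Sum>k\<le>n. norm (coeff (euler_op (of_real \<alpha>) R) k))"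
      unfolding sum_distrib_left using assms by (intro sum_mono norm_coeff_euler_op_ge) simp
    also have "\<dots> \<le> M * (\<Sum>j\<le>n. norm (poly (euler_op (of_real \<alpha>) R) (of_real (y j))))"
      using \<open>degree R \<le> n\<close> by (intro M[rule_format] degree_euler_op)
    also have "\<dots> \<le> M * (\<Sum>j\<le>n. 8/3 * t * G)"
      using \<open>M > 0\<close> norm_euler_op_at_node_le[OF assms that(1,2) y] by (intro mult_left_mono sum_mono) (auto simp: t R G)
    also have "\<dots> = \<alpha> * ((M * (real n + 1) * (8/3) / \<alpha>) * t * G)"
      using assms by simp
    finally show ?thesis
      using assms by (rule mult_left_le_imp_le)
  qed
  moreover have "M * (real n + 1) * (8/3) / \<alpha> > 0"
    using \<open>M > 0\<close> assms by simp
  ultimately show ?thesis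
    by blast
qed

theorem lemma2p5:
  fixes \<alpha> :: real and n :: nat
  assumes "\<alpha> > 0"
  shows "\<exists>C>0. \<forall>(c :: nat \<Rightarrow> complex) (w :: complex).
           (\<forall>i\<le>n. c i \<noteq> 0) \<longrightarrow> norm w < 1 \<longrightarrow> norm w > 1/2 \<longrightarrow>
           bloch_norm \<alpha> (\<lambda>z. \<Sum>i\<le>n. c i * fw \<alpha> w i z)
             \<ge> C * (\<Sum>i\<le>n. norm (c i) * bloch_norm \<alpha> (fw \<alpha> w i))"
proof -
  obtain B where "B > 0" and B: "\<forall>(c :: nat \<Rightarrow> complex) w. 1/2 < norm w \<longrightarrow> norm w < 1 \<longrightarrow>
      (\<Sum>k\<le>n. norm (coeff (recentred (poly_of_coeffs c n) (cnj w) (of_real (1 - norm w ^ 2))) k))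
        \<le> B * (1 - norm w ^ 2) * bloch_norm \<alpha> (\<lambda>z. \<Sum>i\<le>n. c i * fw \<alpha> w i z)"
    using sum_norm_coeff_recentred_le[OF assms] by blast
  define A where "A = (real n + 1) * 2 ^ (2 * n + 1) * (1 + 2 powr \<alpha> * (3 * real n + \<alpha>))"
  have "A > 0"
    using assms by (simp add: A_def add_pos_nonneg)
  have "(\<Sum>i\<le>n. norm (c i) * bloch_norm \<alpha> (fw \<alpha> w i)) \<le> A * B * bloch_norm \<alpha> (\<lambda>z. \<Sum>i\<le>n. c i * fw \<alpha> w i z)"
    if w: "1/2 < norm w" "norm w < 1" for c w
  proof -
    define t where "t = 1 - norm w ^ 2"
    have "t > 0" "w \<noteq> 0"
      using w by (auto simp: t_def abs_square_less_1)
    have "(\<Sum>i\<le>n. norm (c i) * bloch_norm \<alpha> (fw \<alpha> w i))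
        \<le> A * (\<Sum>k\<le>n. norm (coeff (recentred (poly_of_coeffs c n) (cnj w) (of_real t)) k)) / t"
      using sum_norm_mult_bloch_norm_fw_le[OF assms \<open>w \<noteq> 0\<close> w(2), where n = n and c = c]
      by (simp add: A_def t_def)
    also have "\<dots> \<le> A * (B * t * bloch_norm \<alpha> (\<lambda>z. \<Sum>i\<le>n. c i * fw \<alpha> w i z)) / t"
      using B w \<open>A > 0\<close> \<open>t > 0\<close> by (intro divide_right_mono mult_left_mono) (auto simp: t_def)
    also have "\<dots> = A * B * bloch_norm \<alpha> (\<lambda>z. \<Sum>i\<le>n. c i * fw \<alpha> w i z)"
      using \<open>t > 0\<close> by simp
    finally show ?thesis .
  qed
  then show ?thesis
    using \<open>A > 0\<close> \<open>B > 0\<close> by (intro exI[of _ "1 / (A * B)"]) (auto simp: field_simps)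
qed

end
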